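(* Let $\nu\in\mathcal P_s$ with $\nu(\{0\})=0$, let $t\ge a>0$ with $\nu(\{a\})=\nu(\{t\})=0$, and let $y\in\mathbb R$ with $|y|\ne a$. Then $$\int_{(-\infty,a]}\Psi\big(\tfrac xt\big)(\delta_y\vartriangle_\alpha\nu)(dx)=\tfrac12\Psi\big(\tfrac ya\big)M(a,t)+\tfrac12G(a)\Psi\big(\tfrac at\big)\mathbf 1_{\{|y|<a\}}+\tfrac12\Psi\big(\tfrac yt\big)G(t),$$ where $M(a,t)=H(a)\Psi\big(\tfrac at\big)+\big(1-\Psi\big(\tfrac at\big)\big)G(a)$.
   Context: Fix $\alpha>0$. $\mathcal P_s$ is the set of symmetric Borel probability measures on $\mathbb R$. For $x\in\mathbb R$, $\widetilde\delta_x=\frac12(\delta_x+\delta_{-x})$. For a probability measure $\lambda=\mathcal L(X)$ and $c>0$, $T_c\lambda=\mathcal L(cX)$, and $T_0\lambda=\delta_0$. $\widetilde\pi_{2\alpha}$ is the symmetric Pareto probability measure with density $\alpha|y|^{-2\alpha-1}\mathbf 1_{\{|y|\ge1\}}$. The Kendall convolution $\vartriangle_\alpha$ on $\mathcal P_s$ is defined by $\widetilde\delta_x\vartriangle_\alpha\widetilde\delta_y=T_M\big(\varrho^\alpha\widetilde\pi_{2\alpha}+(1-\varrho^\alpha)\widetilde\delta_1\big)$ where $M=\max(|x|,|y|)$, $m=\min(|x|,|y|)$, $\varrho=m/M$ (and $\varrho=0$ if $M=0$), extended by $(\nu_1\vartriangle_\alpha\nu_2)(A)=\int\int(\widetilde\delta_x\vartriangle_\alpha\widetilde\delta_y)(A)\,\nu_1(dx)\nu_2(dy)$.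 For $x\in\mathbb R$ and $\mu\in\mathcal P_s$ we write $\delta_x\vartriangle_\alpha\mu:=\widetilde\delta_x\vartriangle_\alpha\mu$. $\Psi(t)=(1-|t|^\alpha)_+$. For the measure $\nu$: $F(t)=\nu((-\infty,t])$, $G(t)=\int_{\mathbb R}\Psi(x/t)\,\nu(dx)$ for $t\neq0$, and for $t>0$, $H(t)=2F(t)-1-G(t)=t^{-\alpha}\int_{[-t,t]}|x|^\alpha\nu(dx)$. *)

theory Defs
  imports "HOL-Probability.Probability"
begin

definition sym_prob :: "real measure \<Rightarrow> bool" where
  "sym_prob \<nu> \<longleftrightarrow> prob_space \<nu> \<and> sets \<nu> = sets borel \<and> distr \<nu> borel uminus = \<nu>"

definition sdelta :: "real \<Rightarrow> real measure" where
  "sdelta x = measure_of UNIV (sets borel)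
     (\<lambda>A. ennreal (1/2) * indicator A x + ennreal (1/2) * indicator A (- x))"

definition dil :: "real \<Rightarrow> real measure \<Rightarrow> real measure" where
  "dil c L = (if c = 0 then return borel 0 else distr L borel (\<lambda>z. c * z))"

definition spareto :: "real \<Rightarrow> real measure" where
  "spareto \<alpha> = density lborel
     (\<lambda>y. ennreal (\<alpha> * \<bar>y\<bar> powr (- 2 * \<alpha> - 1) * indicator {y. \<bar>y\<bar> \<ge> 1} y))"

definition kmix :: "real \<Rightarrow> real \<Rightarrow> real measure" where
  "kmix \<alpha> r = measure_of UNIV (sets borel)
     (\<lambda>A. ennreal (r powr \<alpha>) * emeasure (spareto \<alpha>) A
          + ennreal (1 - r powr \<alpha>) * emeasure (sdelta 1) A)"

text \<open>Kendall convolution of two symmetrised Dirac measures.\<close>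
definition kdd :: "real \<Rightarrow> real \<Rightarrow> real \<Rightarrow> real measure" where
  "kdd \<alpha> x y = (let M = max \<bar>x\<bar> \<bar>y\<bar>; m = min \<bar>x\<bar> \<bar>y\<bar>;
                    \<rho> = (if M = 0 then 0 else m / M)
                in dil M (kmix \<alpha> \<rho>))"

definition kconv :: "real \<Rightarrow> real measure \<Rightarrow> real measure \<Rightarrow> real measure" where
  "kconv \<alpha> \<nu>1 \<nu>2 = measure_of UNIV (sets borel)
     (\<lambda>A. \<integral>\<^sup>+ x. \<integral>\<^sup>+ y. emeasure (kdd \<alpha> x y) A \<partial>\<nu>2 \<partial>\<nu>1)"

definition Psi :: "real \<Rightarrow> real \<Rightarrow> real" where
  "Psi \<alpha> s = max 0 (1 - \<bar>s\<bar> powr \<alpha>)"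

definition cdfF :: "real measure \<Rightarrow> real \<Rightarrow> real" where
  "cdfF \<nu> s = measure \<nu> {..s}"

definition Gf :: "real \<Rightarrow> real measure \<Rightarrow> real \<Rightarrow> real" where
  "Gf \<alpha> \<nu> s = (\<integral>x. Psi \<alpha> (x / s) \<partial>\<nu>)"

definition Hf :: "real \<Rightarrow> real measure \<Rightarrow> real \<Rightarrow> real" where
  "Hf \<alpha> \<nu> s = 2 * cdfF \<nu> s - 1 - Gf \<alpha> \<nu> s"

definition Mf :: "real \<Rightarrow> real measure \<Rightarrow> real \<Rightarrow> real \<Rightarrow> real" where
  "Mf \<alpha> \<nu> a t = Hf \<alpha> \<nu> a * Psi \<alpha> (a / t) + (1 - Psi \<alpha> (a / t)) * Gf \<alpha> \<nu> a"

end

theory Submission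
  imports Defs
begin

text \<open>
  Since \<open>sdelta y\<close> charges only \<open>\<plusminus>y\<close> and the Kendall product of two symmetrised
  Dirac measures depends only on the absolute values, \<open>kconv \<alpha> (sdelta y) \<nu>\<close> is the mixture
  \<open>\<nu> \<bind> kdd \<alpha> y\<close>, where \<open>kdd \<alpha> y z\<close> is the dilation by \<open>M = max |y| |z|\<close> of a mixture of the
  Pareto law and \<open>sdelta 1\<close>. Integrating \<open>1\<^bsub>(-\<infinity>,a]\<^esub> \<Psi>(\<cdot>/t)\<close> against the dilated Pareto law
  is an elementary integral, and in the coordinates \<open>P = |y|\<^sup>\<alpha>, S = |z|\<^sup>\<alpha>, A = a\<^sup>\<alpha>,
  T = t\<^sup>\<alpha>\<close> the resulting function of \<open>z\<close> is piecewise rational. Off the \<open>\<nu>\<close>-null set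
  \<open>|z| \<in> {a, t}\<close> it coincides with a linear combination of \<open>1\<^bsub>[-a,a]\<^esub>(z)\<close>, \<open>\<Psi>(z/a)\<close> and
  \<open>\<Psi>(z/t)\<close>, whose \<open>\<nu>\<close>-integrals are \<open>2F(a) - 1\<close> (by symmetry of \<open>\<nu>\<close>), \<open>G(a)\<close> and
  \<open>G(t)\<close>.
\<close>

subsection \<open>The Kendall kernel as a mixture\<close>

lemma measure_of_borel_eqI:
  fixes B :: "real measure"
  assumes "sets B = sets borel" and "\<And>A. A \<in> sets borel \<Longrightarrow> \<mu> A = emeasure B A"
  shows "measure_of UNIV (sets borel) \<mu> = B"
proof -
  have "measure_of UNIV (sets borel) \<mu> = measure_of UNIV (sets borel) (emeasure B)"
    by (rule measure_of_eq) (auto simp: assms(2) sets.sigma_sets_eq[of borel, simplified])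
  also have "\<dots> = measure_of (space B) (sets B) (emeasure B)"
    using assms(1) sets_eq_imp_space_eq[OF assms(1)] by simp
  finally show ?thesis by (simp add: measure_of_of_measure)
qed

lemma nn_integral_distr_bernoulli_half:
  "g \<in> borel_measurable borel \<Longrightarrow>
    (\<integral>\<^sup>+u. g u \<partial>distr (measure_pmf (bernoulli_pmf (1/2))) borel (\<lambda>b. if b then x else - x))
      = ennreal (1/2) * g x + ennreal (1/2) * g (- x)"
  by (subst nn_integral_distr) (auto simp: nn_integral_measure_pmf nn_integral_count_space_finite UNIV_bool)

lemma sdelta_eq_distr_bernoulli:
  "sdelta x = distr (measure_pmf (bernoulli_pmf (1/2))) borel (\<lambda>b. if b then x else - x)"
  unfolding sdelta_def
proof (rule measure_of_borel_eqI)
  fix A :: "real set" assume "A \<in> sets borel"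
  then show "ennreal (1/2) * indicator A x + ennreal (1/2) * indicator A (- x)
      = emeasure (distr (measure_pmf (bernoulli_pmf (1/2))) borel (\<lambda>b. if b then x else - x)) A"
    using nn_integral_distr_bernoulli_half[of "indicator A" x]
    by (simp add: nn_integral_indicator[symmetric] del: nn_integral_indicator)
qed simp

lemma sets_sdelta [simp]: "sets (sdelta x) = sets borel"
  by (simp add: sdelta_eq_distr_bernoulli)

lemma prob_space_sdelta: "prob_space (sdelta x)"
  unfolding sdelta_eq_distr_bernoulli
  by (rule prob_space.prob_space_distr) (auto simp: measure_pmf.prob_space_axioms)

lemma nn_integral_sdelta:
  "g \<in> borel_measurable borel \<Longrightarrow>
    (\<integral>\<^sup>+u. g u \<partial>sdelta x) = ennreal (1/2) * g x + ennreal (1/2) * g (- x)"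
  by (simp add: sdelta_eq_distr_bernoulli nn_integral_distr_bernoulli_half)

lemma AE_sdelta_abs_eq: "AE u in sdelta x. \<bar>u\<bar> = \<bar>x\<bar>"
proof (rule AE_I'[where N="{u. \<bar>u\<bar> \<noteq> \<bar>x\<bar>}"])
  have N: "{u::real. \<bar>u\<bar> \<noteq> \<bar>x\<bar>} \<in> sets borel" by measurable
  have "emeasure (sdelta x) {u. \<bar>u\<bar> \<noteq> \<bar>x\<bar>} = (\<integral>\<^sup>+u. indicator {u. \<bar>u\<bar> \<noteq> \<bar>x\<bar>} u \<partial>sdelta x)"
    using N by simp
  also have "\<dots> = 0" using N by (subst nn_integral_sdelta) auto
  finally show "{u. \<bar>u\<bar> \<noteq> \<bar>x\<bar>} \<in> null_sets (sdelta x)" using N by auto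
qed auto

lemma sets_spareto [simp]: "sets (spareto \<alpha>) = sets borel"
  by (simp add: spareto_def)

lemma space_spareto [simp]: "space (spareto \<alpha>) = UNIV"
  by (simp add: spareto_def)

lemma nn_integral_spareto:
  assumes g: "g \<in> borel_measurable borel"
  shows "(\<integral>\<^sup>+u. g u \<partial>spareto \<alpha>) =
    (\<integral>\<^sup>+u. ennreal (\<alpha> * u powr (-2*\<alpha>-1)) * indicator {1..} u * (g u + g (- u)) \<partial>lborel)"
proof -
  let ?h = "\<lambda>u. ennreal (\<alpha> * \<bar>u\<bar> powr (- 2 * \<alpha> - 1))"
  have "(\<integral>\<^sup>+u. g u \<partial>spareto \<alpha>)
      = (\<integral>\<^sup>+u. ennreal (\<alpha> * \<bar>u\<bar> powr (- 2 * \<alpha> - 1) * indicator {y. \<bar>y\<bar> \<ge> 1} u) * g u \<partial>lborel)"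
    unfolding spareto_def using g by (subst nn_integral_density) auto
  also have "\<dots> = (\<integral>\<^sup>+u. ?h u * indicator {1..} u * g u + ?h u * indicator {..-1} u * g u \<partial>lborel)"
    by (intro nn_integral_cong) (auto simp: indicator_def)
  also have "\<dots> = (\<integral>\<^sup>+u. ?h u * indicator {1..} u * g u \<partial>lborel)
                 + (\<integral>\<^sup>+u. ?h u * indicator {..-1} u * g u \<partial>distr lborel borel uminus)"
    using g by (subst nn_integral_add) (auto simp: lborel_distr_uminus)
  also have "(\<integral>\<^sup>+u. ?h u * indicator {..-1} u * g u \<partial>distr lborel borel uminus)
      = (\<integral>\<^sup>+u. ?h u * indicator {1..} u * g (- u) \<partial>lborel)"
    using g by (subst nn_integral_distr) (auto intro!: nn_integral_cong simp: indicator_def)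
  also have "(\<integral>\<^sup>+u. ?h u * indicator {1..} u * g u \<partial>lborel) + \<dots>
      = (\<integral>\<^sup>+u. ?h u * indicator {1..} u * g u + ?h u * indicator {1..} u * g (- u) \<partial>lborel)"
    using g by (intro nn_integral_add[symmetric]) auto
  also have "\<dots> = (\<integral>\<^sup>+u. ennreal (\<alpha> * u powr (-2*\<alpha>-1)) * indicator {1..} u * (g u + g (- u)) \<partial>lborel)"
    by (intro nn_integral_cong) (auto simp: indicator_def distrib_left)
  finally show ?thesis .
qed

lemma prob_space_spareto:
  assumes "\<alpha> > 0"
  shows "prob_space (spareto \<alpha>)"
proof (rule prob_spaceI)
  have "emeasure (spareto \<alpha>) UNIV = (\<integral>\<^sup>+u. ennreal (\<alpha> * u powr (-2*\<alpha>-1)) * indicator {1..} u * (1 + 1) \<partial>lborel)"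
    using nn_integral_spareto[of "\<lambda>_. 1" \<alpha>] by simp
  also have "\<dots> = (\<integral>\<^sup>+u. ennreal (2 * \<alpha> * u powr (-2*\<alpha>-1)) * indicator {1..} u \<partial>lborel)"
    using assms by (intro nn_integral_cong) (auto simp: indicator_def ennreal_mult mult_ac)
  also have "\<dots> = 0 - (- (1 powr (-2*\<alpha>)))"
  proof (rule nn_integral_FTC_atLeast)
    show "((\<lambda>x. - (x powr (-2*\<alpha>))) \<longlongrightarrow> 0) at_top"
      using tendsto_minus[OF tendsto_neg_powr[OF _ filterlim_ident, of "-2*\<alpha>"]] assms by simp
    fix x :: real assume "1 \<le> x"
    then show "((\<lambda>x. - (x powr (-2*\<alpha>))) has_real_derivative 2 * \<alpha> * x powr (-2*\<alpha>-1)) (at x)"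
      by (auto intro!: derivative_eq_intros)
    show "0 \<le> 2 * \<alpha> * x powr (-2*\<alpha>-1)" using assms by simp
  qed simp
  finally show "emeasure (spareto \<alpha>) (space (spareto \<alpha>)) = 1" by simp
qed

lemma measurable_spareto_or_sdelta:
  "\<alpha> > 0 \<Longrightarrow> (\<lambda>b. if b then spareto \<alpha> else sdelta 1) \<in> measurable (measure_pmf p) (subprob_algebra borel)"
  by (auto simp: space_subprob_algebra prob_space_sdelta prob_space_spareto prob_space_imp_subprob_space)

lemma kmix_eq_bind_bernoulli:
  assumes "\<alpha> > 0" "0 \<le> r" "r \<le> 1"
  shows "kmix \<alpha> r = measure_pmf (bernoulli_pmf (r powr \<alpha>)) \<bind> (\<lambda>b. if b then spareto \<alpha> else sdelta 1)"
  unfolding kmix_def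
proof (rule measure_of_borel_eqI)
  show "sets (measure_pmf (bernoulli_pmf (r powr \<alpha>)) \<bind> (\<lambda>b. if b then spareto \<alpha> else sdelta 1)) = sets borel"
    using measurable_spareto_or_sdelta[OF assms(1)] by (subst sets_bind_measurable) auto
next
  fix A :: "real set" assume "A \<in> sets borel"
  moreover have "r powr \<alpha> \<le> 1" using assms by (intro powr_le1) auto
  ultimately show "ennreal (r powr \<alpha>) * emeasure (spareto \<alpha>) A + ennreal (1 - r powr \<alpha>) * emeasure (sdelta 1) A
      = emeasure (measure_pmf (bernoulli_pmf (r powr \<alpha>)) \<bind> (\<lambda>b. if b then spareto \<alpha> else sdelta 1)) A"
    by (subst emeasure_bind[OF _ measurable_spareto_or_sdelta[OF assms(1)]])
      (auto simp: nn_integral_measure_pmf nn_integral_count_space_finite UNIV_bool)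
qed

lemma nn_integral_kmix:
  assumes "\<alpha> > 0" "0 \<le> r" "r \<le> 1" and g: "g \<in> borel_measurable borel"
  shows "(\<integral>\<^sup>+u. g u \<partial>kmix \<alpha> r)
    = ennreal (r powr \<alpha>) * (\<integral>\<^sup>+u. g u \<partial>spareto \<alpha>) + ennreal (1 - r powr \<alpha>) * (\<integral>\<^sup>+u. g u \<partial>sdelta 1)"
proof -
  have "r powr \<alpha> \<le> 1" using assms by (intro powr_le1) auto
  then show ?thesis
    unfolding kmix_eq_bind_bernoulli[OF assms(1-3)]
    using g by (subst nn_integral_bind[OF g measurable_spareto_or_sdelta[OF assms(1)]])
      (auto simp: nn_integral_measure_pmf nn_integral_count_space_finite UNIV_bool)
qed

lemma sets_kmix [simp]: "sets (kmix \<alpha> r) = sets borel"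
  by (simp add: kmix_def sets.sigma_sets_eq[of borel, simplified])

lemma space_kmix [simp]: "space (kmix \<alpha> r) = UNIV"
  by (simp add: kmix_def)

lemma prob_space_kmix:
  assumes "\<alpha> > 0" "0 \<le> r" "r \<le> 1"
  shows "prob_space (kmix \<alpha> r)"
proof (rule prob_spaceI)
  have p: "r powr \<alpha> \<le> 1" using assms by (intro powr_le1) auto
  have "emeasure (kmix \<alpha> r) UNIV = (\<integral>\<^sup>+u. 1 \<partial>kmix \<alpha> r)" by simp
  also have "\<dots> = ennreal (r powr \<alpha>) + ennreal (1 - r powr \<alpha>)"
    using assms prob_space.emeasure_space_1[OF prob_space_spareto[OF assms(1)]]
      prob_space.emeasure_space_1[OF prob_space_sdelta]
    by (subst nn_integral_kmix) auto
  also have "\<dots> = 1" using p by (subst ennreal_plus[symmetric]) auto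
  finally show "emeasure (kmix \<alpha> r) (space (kmix \<alpha> r)) = 1" by simp
qed

lemma kdd_eq_distr_kmix:
  "kdd \<alpha> y z = (if max (abs y) (abs z) = 0 then return borel 0
     else distr (kmix \<alpha> (min (abs y) (abs z) / max (abs y) (abs z))) borel (\<lambda>u. max (abs y) (abs z) * u))"
  unfolding kdd_def dil_def Let_def by auto

lemma min_div_max_abs_bounds:
  "0 \<le> min (abs y) (abs z) / max (abs y) (abs z)" "min (abs y) (abs z) / max (abs y) (abs z) \<le> (1::real)"
  by (auto simp: divide_le_eq_1)

lemma sets_kdd [simp]: "sets (kdd \<alpha> y z) = sets borel"
  by (simp add: kdd_eq_distr_kmix)

lemma measurable_kmix_scale [measurable]: "(\<lambda>u. c * u) \<in> borel_measurable (kmix \<alpha> r)"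
  by (simp add: measurable_cong_sets[OF sets_kmix refl])

lemma prob_space_kdd:
  assumes "\<alpha> > 0"
  shows "prob_space (kdd \<alpha> y z)"
  using prob_space_kmix[OF assms min_div_max_abs_bounds[of y z]] unfolding kdd_eq_distr_kmix
  by (auto intro!: prob_space_return prob_space.prob_space_distr)

lemma nn_integral_kdd:
  fixes y z :: real
  assumes "\<alpha> > 0" and g: "g \<in> borel_measurable borel"
  defines "M \<equiv> max (abs y) (abs z)" and "r \<equiv> min (abs y) (abs z) / max (abs y) (abs z)"
  shows "(\<integral>\<^sup>+u. g u \<partial>kdd \<alpha> y z) = (if M = 0 then g 0 else
     ennreal (r powr \<alpha>) * (\<integral>\<^sup>+u. g (M * u) \<partial>spareto \<alpha>)
     + ennreal (1 - r powr \<alpha>) * (ennreal (1/2) * g M + ennreal (1/2) * g (- M)))"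
proof (cases "M = 0")
  case True
  then show ?thesis
    using g by (simp add: kdd_eq_distr_kmix[of \<alpha> y z, folded M_def r_def] nn_integral_return)
next
  case False
  then show ?thesis
    using g min_div_max_abs_bounds[of y z] assms(1)
    by (simp add: kdd_eq_distr_kmix[of \<alpha> y z, folded M_def r_def] nn_integral_distr
        nn_integral_kmix nn_integral_sdelta r_def)
qed

lemma kdd_measurable:
  assumes "\<alpha> > 0" and "sets N = sets borel"
  shows "kdd \<alpha> y \<in> measurable N (subprob_algebra borel)"
proof (rule measurable_subprob_algebra)
  fix A :: "real set" assume A: "A \<in> sets borel"
  have "(\<lambda>z. emeasure (kdd \<alpha> y z) A) = (\<lambda>z. if max (abs y) (abs z) = 0 then indicator A 0 else
     ennreal ((min (abs y) (abs z) / max (abs y) (abs z)) powr \<alpha>) *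
       (\<integral>\<^sup>+u. ennreal (\<alpha> * u powr (-2*\<alpha>-1)) * indicator {1..} u *
           (indicator A (max (abs y) (abs z) * u) + indicator A (max (abs y) (abs z) * - u)) \<partial>lborel)
     + ennreal (1 - (min (abs y) (abs z) / max (abs y) (abs z)) powr \<alpha>) *
        (ennreal (1/2) * indicator A (max (abs y) (abs z)) + ennreal (1/2) * indicator A (- max (abs y) (abs z))))"
    (is "_ = ?R")
  proof
    fix z
    have "emeasure (kdd \<alpha> y z) A = (\<integral>\<^sup>+u. indicator A u \<partial>kdd \<alpha> y z)"
      using A by simp
    also have "\<dots> = ?R z"
      using A assms(1) by (subst nn_integral_kdd) (auto simp: nn_integral_spareto)
    finally show "emeasure (kdd \<alpha> y z) A = ?R z" .
  qed
  also have "\<dots> \<in> borel_measurable N"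
    using A by (simp add: measurable_cong_sets[OF assms(2) refl])
  finally show "(\<lambda>z. emeasure (kdd \<alpha> y z) A) \<in> borel_measurable N" .
qed (auto simp: prob_space_kdd[OF assms(1)] prob_space_imp_subprob_space)

lemma kconv_sdelta_eq_bind:
  assumes "\<alpha> > 0" and N: "sets N = sets borel" "prob_space N"
  shows "kconv \<alpha> (sdelta y) N = N \<bind> kdd \<alpha> y"
  unfolding kconv_def
proof (rule measure_of_borel_eqI)
  have "space N \<noteq> {}" using N(2) prob_space.not_empty by blast
  note bind_facts = kdd_measurable[OF assms(1) N(1)] this
  show "sets (N \<bind> kdd \<alpha> y) = sets borel"
    using bind_facts by (subst sets_bind_measurable) auto
  fix A :: "real set" assume A: "A \<in> sets borel"
  have "AE x in sdelta y. (\<integral>\<^sup>+z. emeasure (kdd \<alpha> x z) A \<partial>N) = (\<integral>\<^sup>+z. emeasure (kdd \<alpha> y z) A \<partial>N)"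
    using AE_sdelta_abs_eq[of y] by eventually_elim (simp add: kdd_def)
  then have "(\<integral>\<^sup>+x. \<integral>\<^sup>+z. emeasure (kdd \<alpha> x z) A \<partial>N \<partial>sdelta y) = (\<integral>\<^sup>+z. emeasure (kdd \<alpha> y z) A \<partial>N)"
    using prob_space.emeasure_space_1[OF prob_space_sdelta] by (subst nn_integral_cong_AE) auto
  also have "\<dots> = emeasure (N \<bind> kdd \<alpha> y) A"
    using bind_facts A by (subst emeasure_bind) auto
  finally show "(\<integral>\<^sup>+x. \<integral>\<^sup>+z. emeasure (kdd \<alpha> x z) A \<partial>N \<partial>sdelta y) = emeasure (N \<bind> kdd \<alpha> y) A" .
qed

lemma sets_kconv [simp]: "sets (kconv \<alpha> \<mu> \<nu>) = sets borel"
  by (simp add: kconv_def sets.sigma_sets_eq[of borel, simplified])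

lemma nn_integral_kconv_sdelta:
  assumes "\<alpha> > 0" "sym_prob \<nu>" and g: "g \<in> borel_measurable borel"
  shows "(\<integral>\<^sup>+x. g x \<partial>kconv \<alpha> (sdelta y) \<nu>) = (\<integral>\<^sup>+z. \<integral>\<^sup>+x. g x \<partial>kdd \<alpha> y z \<partial>\<nu>)"
proof -
  have "sets \<nu> = sets borel" "prob_space \<nu>" using assms(2) by (auto simp: sym_prob_def)
  then show ?thesis
    by (simp add: kconv_sdelta_eq_bind[OF assms(1)] nn_integral_bind[OF g kdd_measurable[OF assms(1)]])
qed

subsection \<open>Truncated Pareto integrals\<close>

lemma powr_le_powr_iff:
  fixes u v :: real
  assumes "0 \<le> u" "0 \<le> v" "\<alpha> > 0"
  shows "u powr \<alpha> \<le> v powr \<alpha> \<longleftrightarrow> u \<le> v"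
  using assms powr_less_mono2[of \<alpha> v u] powr_mono2[of \<alpha> u v] by (cases "v < u") auto

lemma powr_less_powr_iff:
  fixes u v :: real
  assumes "0 \<le> u" "0 \<le> v" "\<alpha> > 0"
  shows "u powr \<alpha> < v powr \<alpha> \<longleftrightarrow> u < v"
  using powr_le_powr_iff[OF assms(2,1,3)] by (simp add: not_le[symmetric])

lemma powr_eq_powr_iff:
  fixes u v :: real
  assumes "0 \<le> u" "0 \<le> v" "\<alpha> > 0"
  shows "u powr \<alpha> = v powr \<alpha> \<longleftrightarrow> u = v"
  using powr_le_powr_iff[OF assms] powr_le_powr_iff[OF assms(2,1,3)] by auto

lemma max_powr_distrib:
  fixes u v :: real
  assumes "0 \<le> u" "0 \<le> v" "\<alpha> > 0"
  shows "max u v powr \<alpha> = max (u powr \<alpha>) (v powr \<alpha>)"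
  using powr_le_powr_iff[OF assms] by (simp add: max_def)

lemma min_powr_distrib:
  fixes u v :: real
  assumes "0 \<le> u" "0 \<le> v" "\<alpha> > 0"
  shows "min u v powr \<alpha> = min (u powr \<alpha>) (v powr \<alpha>)"
  using powr_le_powr_iff[OF assms] by (simp add: min_def)

lemma Psi_div_eq:
  "\<alpha> > 0 \<Longrightarrow> b > 0 \<Longrightarrow> Psi \<alpha> (x / b) = max 0 (1 - \<bar>x\<bar> powr \<alpha> / b powr \<alpha>)"
  by (simp add: Psi_def abs_divide powr_divide)

lemma Psi_eq_if_le_1:
  assumes "\<alpha> > 0" "0 \<le> s"
  shows "Psi \<alpha> s = (if s \<le> 1 then 1 - s powr \<alpha> else 0)"
  using powr_le_powr_iff[of s 1 \<alpha>] assms by (auto simp: Psi_def)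

lemma Psi_bounds: "0 \<le> Psi \<alpha> s" "\<alpha> > 0 \<Longrightarrow> Psi \<alpha> s \<le> 1"
  by (auto simp: Psi_def)

lemma Psi_le_indicator:
  assumes "\<alpha> > 0" "0 < a"
  shows "Psi \<alpha> (z / a) \<le> indicator {-a..a} z"
proof (cases "\<bar>z\<bar> \<le> a")
  case True
  then show ?thesis using Psi_bounds(2)[OF assms(1)] by (simp add: indicator_def abs_le_iff)
next
  case False
  then have "a powr \<alpha> < \<bar>z\<bar> powr \<alpha>" using assms powr_less_powr_iff[of a "\<bar>z\<bar>" \<alpha>] by simp
  then show ?thesis using assms by (simp add: Psi_div_eq)
qed

definition pareto_Psi_integral :: "real \<Rightarrow> real \<Rightarrow> real \<Rightarrow> real" where
  "pareto_Psi_integral X B T = (if X \<le> B then (1 - (X/B)^2) / 2 - X/T * (1 - X/B) else 0)"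

lemma pareto_Psi_integral_nonneg:
  assumes "0 \<le> X" "0 < B" "B \<le> T"
  shows "0 \<le> pareto_Psi_integral X B T"
proof (cases "X \<le> B")
  case True
  define q where "q = X / B"
  have q: "0 \<le> q" "q \<le> 1" using assms True by (auto simp: q_def)
  have "X / T \<le> q" unfolding q_def using assms by (intro divide_left_mono) auto
  then have "X / T * (1 - q) \<le> q * (1 - q)" using q by (intro mult_right_mono) auto
  moreover have "(1 - q^2) / 2 - q * (1 - q) = (1 - q)^2 / 2" by (simp add: power2_eq_square field_simps)
  moreover have "0 \<le> (1 - q)^2 / 2" by simp
  ultimately have "0 \<le> (1 - q^2) / 2 - X / T * (1 - q)" by linarith
  then show ?thesis using True by (simp add: pareto_Psi_integral_def q_def)
qed (simp add: pareto_Psi_integral_def)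

lemma has_integral_pareto_Psi:
  fixes \<alpha> c K :: real
  assumes "\<alpha> > 0" "1 \<le> c"
  shows "((\<lambda>u. \<alpha> * u powr (-2*\<alpha>-1) * (1 - K * u powr \<alpha>))
          has_integral (1 - (c powr (-\<alpha>))^2) / 2 - K * (1 - c powr (-\<alpha>))) {1..c}"
proof -
  define F where "F u = - (u powr (-2*\<alpha>)) / 2 + K * u powr (-\<alpha>)" for u
  have "c powr (-2*\<alpha>) = (c powr (-\<alpha>))^2"
    using assms by (simp add: power2_eq_square powr_add[symmetric])
  then have "F c - F 1 = (1 - (c powr (-\<alpha>))^2) / 2 - K * (1 - c powr (-\<alpha>))"
    by (simp add: F_def field_simps)
  moreover have "((\<lambda>u. \<alpha> * u powr (-2*\<alpha>-1) * (1 - K * u powr \<alpha>)) has_integral F c - F 1) {1..c}"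
  proof (rule fundamental_theorem_of_calculus)
    fix u assume "u \<in> {1..c}"
    then have u: "u > 0" by auto
    have "(F has_real_derivative (- ((-2*\<alpha>) * u powr (-2*\<alpha> - 1)) / 2 + K * ((-\<alpha>) * u powr (-\<alpha> - 1)))) (at u)"
      unfolding F_def by (intro derivative_eq_intros u) auto
    moreover have "u powr (-\<alpha> - 1) = u powr (-2*\<alpha> - 1) * u powr \<alpha>"
      using u by (simp add: powr_add[symmetric])
    ultimately show "(F has_vector_derivative \<alpha> * u powr (-2*\<alpha>-1) * (1 - K * u powr \<alpha>)) (at u within {1..c})"
      by (simp add: algebra_simps has_real_derivative_iff_has_vector_derivative[symmetric]
          has_field_derivative_at_within)
  qed (use assms in auto)
  ultimately show ?thesis by simp
qed

lemma nn_integral_pareto_Psi: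
  assumes "\<alpha> > 0" "M > 0" "0 < b" "b \<le> t"
  shows "(\<integral>\<^sup>+u. ennreal (\<alpha> * u powr (-2*\<alpha>-1)) * indicator {1..} u
             * ennreal (indicator {..b/M} u * (1 - (M * u / t) powr \<alpha>)) \<partial>lborel)
    = ennreal (pareto_Psi_integral (M powr \<alpha>) (b powr \<alpha>) (t powr \<alpha>))"
proof (cases "M \<le> b")
  case False
  then have "b / M < 1" using assms by (simp add: divide_less_eq)
  then have "(\<integral>\<^sup>+u. ennreal (\<alpha> * u powr (-2*\<alpha>-1)) * indicator {1..} u
             * ennreal (indicator {..b/M} u * (1 - (M * u / t) powr \<alpha>)) \<partial>lborel) = 0"
    by (subst nn_integral_0_iff) (auto simp: indicator_def)
  moreover have "\<not> M powr \<alpha> \<le> b powr \<alpha>" using False assms powr_le_powr_iff[of M b \<alpha>] by auto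
  ultimately show ?thesis by (simp add: pareto_Psi_integral_def)
next
  case True
  define K where "K = (M / t) powr \<alpha>"
  have t: "t > 0" using assms by linarith
  have scale: "(M * u / t) powr \<alpha> = K * u powr \<alpha>" if "u \<ge> 0" for u
    using that assms t by (simp add: K_def powr_mult[symmetric] mult.commute[of M] times_divide_eq_right)
  have "(\<integral>\<^sup>+u. ennreal (\<alpha> * u powr (-2*\<alpha>-1)) * indicator {1..} u
             * ennreal (indicator {..b/M} u * (1 - (M * u / t) powr \<alpha>)) \<partial>lborel)
      = (\<integral>\<^sup>+u. ennreal (\<alpha> * u powr (-2*\<alpha>-1) * (1 - K * u powr \<alpha>)) * indicator {1..b/M} u \<partial>lborel)"
    using assms by (intro nn_integral_cong) (auto simp: indicator_def scale ennreal_mult')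
  also have "\<dots> = ennreal ((1 - ((b/M) powr (-\<alpha>))^2) / 2 - K * (1 - (b/M) powr (-\<alpha>)))"
  proof (rule nn_integral_has_integral_lebesgue')
    fix u assume u: "u \<in> {1..b/M}"
    then have "M * u / t \<le> 1" using assms t by (simp add: field_simps)
    then have "(M * u / t) powr \<alpha> \<le> 1" using u assms t by (intro powr_le1) auto
    then show "0 \<le> \<alpha> * u powr (-2*\<alpha>-1) * (1 - K * u powr \<alpha>)" using u assms scale[of u] by simp
  next
    have "1 \<le> b / M" using True assms by simp
    then show "((\<lambda>u. \<alpha> * u powr (-2*\<alpha>-1) * (1 - K * u powr \<alpha>)) has_integral
        (1 - ((b/M) powr (-\<alpha>))^2) / 2 - K * (1 - (b/M) powr (-\<alpha>))) {1..b/M}"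
      using assms(1) by (rule has_integral_pareto_Psi[rotated])
  qed
  also have "(b/M) powr (-\<alpha>) = M powr \<alpha> / b powr \<alpha>"
    using assms by (simp add: powr_minus_divide powr_divide)
  also have "K = M powr \<alpha> / t powr \<alpha>" using assms t by (simp add: K_def powr_divide)
  also have "M powr \<alpha> \<le> b powr \<alpha>" using True assms by (intro powr_mono2) auto
  then have "(1 - (M powr \<alpha> / b powr \<alpha>)^2) / 2 - M powr \<alpha> / t powr \<alpha> * (1 - M powr \<alpha> / b powr \<alpha>)
      = pareto_Psi_integral (M powr \<alpha>) (b powr \<alpha>) (t powr \<alpha>)"
    by (simp add: pareto_Psi_integral_def)
  finally show ?thesis .
qed

lemma trunc_Psi_scaled:
  assumes "\<alpha> > 0" "0 < a" "a \<le> t" "M > 0" "1 \<le> u"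
  shows "indicator {..a} (M * u) * Psi \<alpha> (M * u / t) = indicator {..a/M} u * (1 - (M * u / t) powr \<alpha>)"
    and "indicator {..a} (M * - u) * Psi \<alpha> (M * - u / t) = indicator {..t/M} u * (1 - (M * u / t) powr \<alpha>)"
proof -
  have t: "t > 0" "0 \<le> M * u / t" using assms by auto
  have "M * u \<le> a \<longleftrightarrow> u \<le> a / M" "M * u / t \<le> 1 \<longleftrightarrow> u \<le> t / M"
    using assms t by (simp_all add: field_simps)
  moreover have "M * - u \<le> a" using assms by (simp add: order_trans[of _ 0])
  moreover have "Psi \<alpha> (M * - u / t) = Psi \<alpha> (M * u / t)" by (simp add: Psi_def)
  ultimately show "indicator {..a} (M * u) * Psi \<alpha> (M * u / t) = indicator {..a/M} u * (1 - (M * u / t) powr \<alpha>)"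
    and "indicator {..a} (M * - u) * Psi \<alpha> (M * - u / t) = indicator {..t/M} u * (1 - (M * u / t) powr \<alpha>)"
    using assms t by (auto simp: Psi_eq_if_le_1 indicator_def divide_le_eq_1)
qed

lemma trunc_Psi_at_pm:
  assumes "\<alpha> > 0" "0 < a" "a \<le> t" "0 \<le> M"
  shows "indicator {..a} M * Psi \<alpha> (M / t)
      = (if M powr \<alpha> \<le> a powr \<alpha> then 1 else 0) * max 0 (1 - M powr \<alpha> / t powr \<alpha>)"
    and "indicator {..a} (- M) * Psi \<alpha> (- M / t) = max 0 (1 - M powr \<alpha> / t powr \<alpha>)"
  using assms Psi_div_eq[of \<alpha> t M] Psi_div_eq[of \<alpha> t "- M"] powr_le_powr_iff[of M a \<alpha>]
  by (simp_all add: indicator_def)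

lemma nn_integral_spareto_trunc_Psi:
  assumes "\<alpha> > 0" "0 < a" "a \<le> t" "M > 0"
  shows "(\<integral>\<^sup>+u. ennreal (indicator {..a} (M * u) * Psi \<alpha> (M * u / t)) \<partial>spareto \<alpha>)
    = ennreal (pareto_Psi_integral (M powr \<alpha>) (a powr \<alpha>) (t powr \<alpha>)
               + pareto_Psi_integral (M powr \<alpha>) (t powr \<alpha>) (t powr \<alpha>))"
proof -
  let ?h = "\<lambda>u. ennreal (\<alpha> * u powr (-2*\<alpha>-1)) * indicator {1..} u"
  let ?g = "\<lambda>b u. ennreal (indicator {..b/M} u * (1 - (M * u / t) powr \<alpha>))"
  have "(\<integral>\<^sup>+u. ennreal (indicator {..a} (M * u) * Psi \<alpha> (M * u / t)) \<partial>spareto \<alpha>)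
      = (\<integral>\<^sup>+u. ?h u * (ennreal (indicator {..a} (M * u) * Psi \<alpha> (M * u / t))
                      + ennreal (indicator {..a} (M * - u) * Psi \<alpha> (M * - u / t))) \<partial>lborel)"
    by (subst nn_integral_spareto) (auto simp: Psi_def)
  also have "\<dots> = (\<integral>\<^sup>+u. ?h u * ?g a u + ?h u * ?g t u \<partial>lborel)"
  proof (rule nn_integral_cong)
    fix u :: real
    show "?h u * (ennreal (indicator {..a} (M * u) * Psi \<alpha> (M * u / t))
                  + ennreal (indicator {..a} (M * - u) * Psi \<alpha> (M * - u / t)))
        = ?h u * ?g a u + ?h u * ?g t u"
      using trunc_Psi_scaled[OF assms, of u] by (cases "1 \<le> u") (simp_all add: distrib_left)
  qed
  also have "\<dots> = (\<integral>\<^sup>+u. ?h u * ?g a u \<partial>lborel) + (\<integral>\<^sup>+u. ?h u * ?g t u \<partial>lborel)"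
    by (rule nn_integral_add) auto
  also have "\<dots> = ennreal (pareto_Psi_integral (M powr \<alpha>) (a powr \<alpha>) (t powr \<alpha>))
                 + ennreal (pareto_Psi_integral (M powr \<alpha>) (t powr \<alpha>) (t powr \<alpha>))"
    using assms by (simp only: nn_integral_pareto_Psi)
  finally have sum: "(\<integral>\<^sup>+u. ennreal (indicator {..a} (M * u) * Psi \<alpha> (M * u / t)) \<partial>spareto \<alpha>)
      = ennreal (pareto_Psi_integral (M powr \<alpha>) (a powr \<alpha>) (t powr \<alpha>))
        + ennreal (pareto_Psi_integral (M powr \<alpha>) (t powr \<alpha>) (t powr \<alpha>))" .
  have "a powr \<alpha> \<le> t powr \<alpha>" using assms by (intro powr_mono2) auto
  then have "0 \<le> pareto_Psi_integral (M powr \<alpha>) (a powr \<alpha>) (t powr \<alpha>)"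
    and "0 \<le> pareto_Psi_integral (M powr \<alpha>) (t powr \<alpha>) (t powr \<alpha>)"
    using assms by (auto intro!: pareto_Psi_integral_nonneg)
  then show ?thesis by (simp add: sum ennreal_plus)
qed

subsection \<open>The truncated kernel integral\<close>

lemma ennreal_mixture:
  fixes p J f1 f2 :: real
  assumes "0 \<le> p" "p \<le> 1" "0 \<le> J" "0 \<le> f1" "0 \<le> f2"
  shows "ennreal p * ennreal J + ennreal (1 - p) * (ennreal (1/2) * ennreal f1 + ennreal (1/2) * ennreal f2)
    = ennreal (p * J + (1 - p) * (1/2 * f1 + 1/2 * f2))"
proof -
  have "ennreal (p * J + (1 - p) * (1/2 * f1 + 1/2 * f2))
      = ennreal (p * J) + ennreal ((1 - p) * (1/2 * f1 + 1/2 * f2))"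
    using assms by (intro ennreal_plus) auto
  also have "\<dots> = ennreal p * ennreal J + ennreal (1 - p) * (ennreal (1/2 * f1) + ennreal (1/2 * f2))"
    using assms by (simp add: ennreal_mult ennreal_plus)
  also have "ennreal (1/2 * f1) = ennreal (1/2) * ennreal f1"
    using assms(4) by (rule ennreal_mult[rotated]) simp
  also have "ennreal (1/2 * f2) = ennreal (1/2) * ennreal f2"
    using assms(5) by (rule ennreal_mult[rotated]) simp
  finally show ?thesis by simp
qed

definition kendall_trunc_Psi :: "real \<Rightarrow> real \<Rightarrow> real \<Rightarrow> real \<Rightarrow> real" where
  "kendall_trunc_Psi A T P S =
    (if max P S = 0 then 1
     else min P S / max P S * (pareto_Psi_integral (max P S) A T + pareto_Psi_integral (max P S) T T)
       + (1 - min P S / max P S) * ((if max P S \<le> A then 1 else 0) + 1) * max 0 (1 - max P S / T) / 2)"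

lemma nn_integral_kdd_trunc_Psi:
  fixes y z :: real
  assumes "\<alpha> > 0" "0 < a" "a \<le> t"
  shows "(\<integral>\<^sup>+x. ennreal (indicator {..a} x * Psi \<alpha> (x / t)) \<partial>kdd \<alpha> y z)
    = ennreal (kendall_trunc_Psi (a powr \<alpha>) (t powr \<alpha>) (\<bar>y\<bar> powr \<alpha>) (\<bar>z\<bar> powr \<alpha>))"
proof -
  define M where "M = max \<bar>y\<bar> \<bar>z\<bar>"
  define r where "r = min \<bar>y\<bar> \<bar>z\<bar> / M"
  define X where "X = max (\<bar>y\<bar> powr \<alpha>) (\<bar>z\<bar> powr \<alpha>)"
  have X: "M powr \<alpha> = X" using assms(1) unfolding M_def X_def by (intro max_powr_distrib) auto
  have f: "(\<lambda>x. ennreal (indicator {..a} x * Psi \<alpha> (x / t))) \<in> borel_measurable borel"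
    unfolding Psi_def by measurable
  show ?thesis
  proof (cases "M = 0")
    case True
    then have "X = 0" using X by simp
    then show ?thesis
      using True assms f by (simp add: nn_integral_kdd M_def X_def kendall_trunc_Psi_def Psi_def)
  next
    case False
    then have M: "M > 0" by (simp add: M_def)
    have r: "0 \<le> r powr \<alpha>" "r powr \<alpha> \<le> 1"
      using min_div_max_abs_bounds[of y z] assms(1) unfolding r_def M_def by (auto intro!: powr_le1)
    have r_eq: "r powr \<alpha> = min (\<bar>y\<bar> powr \<alpha>) (\<bar>z\<bar> powr \<alpha>) / X"
      using M assms(1) by (simp add: r_def powr_divide min_powr_distrib X)
    define J where "J = pareto_Psi_integral X (a powr \<alpha>) (t powr \<alpha>) + pareto_Psi_integral X (t powr \<alpha>) (t powr \<alpha>)"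
    define c where "c = max 0 (1 - X / t powr \<alpha>)"
    have "a powr \<alpha> \<le> t powr \<alpha>" using assms by (intro powr_mono2) auto
    moreover have "0 \<le> X" by (simp add: X_def le_max_iff_disj)
    ultimately have J: "0 \<le> J"
      using assms by (auto simp: J_def intro!: add_nonneg_nonneg pareto_Psi_integral_nonneg)
    have "(\<integral>\<^sup>+x. ennreal (indicator {..a} x * Psi \<alpha> (x / t)) \<partial>kdd \<alpha> y z)
        = ennreal (r powr \<alpha>) * ennreal J
          + ennreal (1 - r powr \<alpha>) * (ennreal (1/2) * ennreal ((if X \<le> a powr \<alpha> then 1 else 0) * c)
                                     + ennreal (1/2) * ennreal c)"
      using False f nn_integral_spareto_trunc_Psi[OF assms M] trunc_Psi_at_pm[OF assms less_imp_le[OF M]]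
      by (simp add: nn_integral_kdd[OF assms(1) f, of y z, folded M_def] r_def J_def X c_def)
    also have "\<dots> = ennreal (r powr \<alpha> * J + (1 - r powr \<alpha>) * (1/2 * ((if X \<le> a powr \<alpha> then 1 else 0) * c) + 1/2 * c))"
      using r J by (intro ennreal_mixture) (auto simp: c_def)
    also have "r powr \<alpha> * J + (1 - r powr \<alpha>) * (1/2 * ((if X \<le> a powr \<alpha> then 1 else 0) * c) + 1/2 * c)
        = kendall_trunc_Psi (a powr \<alpha>) (t powr \<alpha>) (\<bar>y\<bar> powr \<alpha>) (\<bar>z\<bar> powr \<alpha>)"
      using M X unfolding r_eq J_def c_def kendall_trunc_Psi_def X_def[symmetric]
      by (simp add: field_simps)
    finally show ?thesis .
  qed
qed

lemma kendall_trunc_Psi_eq: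
  fixes P S A T :: real
  assumes P: "0 \<le> P" and S: "0 \<le> S" and A: "0 < A" "A \<le> T"
    and PA: "P \<noteq> A" and SA: "S \<noteq> A" and ST: "S \<noteq> T"
  shows "kendall_trunc_Psi A T P S
    = (max 0 (1 - P/A) * (((if S \<le> A then 1 else 0) - max 0 (1 - S/A)) * (1 - A/T) + A/T * max 0 (1 - S/A))
       + max 0 (1 - S/A) * (1 - A/T) * (if P < A then 1 else 0)
       + max 0 (1 - P/T) * max 0 (1 - S/T)) / 2"
proof -
  have T: "0 < T" using A by linarith
  note defs = kendall_trunc_Psi_def pareto_Psi_integral_def field_simps power2_eq_square
  consider "P \<le> S" "S < A" | "P \<le> S" "A < S" "S < T" | "P \<le> S" "T < S"
    | "S < P" "P < A" | "S < P" "A < P" "P \<le> T" | "S < P" "T < P"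
    using SA ST PA by linarith
  then show ?thesis
  proof cases
    case 1
    then show ?thesis using P A T by (auto simp: defs)
  next
    case 2
    then show ?thesis using P A T PA by (cases "P < A") (auto simp: defs max_def)
  next
    case 3
    then show ?thesis using P A T PA by (cases "P < A"; cases "P < T") (auto simp: defs max_def)
  next
    case 4
    then show ?thesis using S A T by (auto simp: defs)
  next
    case 5
    then show ?thesis using S A T SA by (cases "S < A") (auto simp: defs max_def)
  next
    case 6
    then show ?thesis using S A T SA by (cases "S < A"; cases "S < T") (auto simp: defs max_def)
  qed
qed

definition trunc_Psi_kernel :: "real \<Rightarrow> real \<Rightarrow> real \<Rightarrow> real \<Rightarrow> real \<Rightarrow> real" where
  "trunc_Psi_kernel \<alpha> a t y z =
    (Psi \<alpha> (y/a) * ((indicator {-a..a} z - Psi \<alpha> (z/a)) * Psi \<alpha> (a/t) + (1 - Psi \<alpha> (a/t)) * Psi \<alpha> (z/a))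
     + Psi \<alpha> (z/a) * Psi \<alpha> (a/t) * (if \<bar>y\<bar> < a then 1 else 0)
     + Psi \<alpha> (y/t) * Psi \<alpha> (z/t)) / 2"

lemma nn_integral_kdd_trunc_Psi_eq_kernel:
  fixes y z :: real
  assumes "\<alpha> > 0" "0 < a" "a \<le> t" "\<bar>y\<bar> \<noteq> a" "\<bar>z\<bar> \<noteq> a" "\<bar>z\<bar> \<noteq> t"
  shows "(\<integral>\<^sup>+x. ennreal (indicator {..a} x * Psi \<alpha> (x / t)) \<partial>kdd \<alpha> y z) = ennreal (trunc_Psi_kernel \<alpha> a t y z)"
proof -
  define P S A T where "P = \<bar>y\<bar> powr \<alpha>" "S = \<bar>z\<bar> powr \<alpha>" "A = a powr \<alpha>" "T = t powr \<alpha>"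
  have t: "0 < t" using assms by linarith
  have PS: "0 \<le> P" "0 \<le> S" by (simp_all add: P_S_A_T_def)
  have A: "0 < A" "A \<le> T" using assms by (auto simp: P_S_A_T_def intro: powr_mono2)
  have atoms: "P \<noteq> A" "S \<noteq> A" "S \<noteq> T"
    using assms t powr_eq_powr_iff[of "\<bar>y\<bar>" a \<alpha>] powr_eq_powr_iff[of "\<bar>z\<bar>" a \<alpha>]
      powr_eq_powr_iff[of "\<bar>z\<bar>" t \<alpha>]
    by (auto simp: P_S_A_T_def)
  have "Psi \<alpha> (y/a) = max 0 (1 - P/A)" "Psi \<alpha> (z/a) = max 0 (1 - S/A)"
    using Psi_div_eq[OF assms(1,2)] by (simp_all add: P_S_A_T_def)
  moreover have "Psi \<alpha> (y/t) = max 0 (1 - P/T)" "Psi \<alpha> (z/t) = max 0 (1 - S/T)"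
    using Psi_div_eq[OF assms(1) t] by (simp_all add: P_S_A_T_def)
  moreover have "Psi \<alpha> (a/t) = 1 - A/T"
    using Psi_div_eq[OF assms(1) t, of a] A assms(2) by (simp add: P_S_A_T_def divide_le_eq_1)
  moreover have "indicator {-a..a} z = (if S \<le> A then 1 else (0::real))"
    using assms powr_le_powr_iff[of "\<bar>z\<bar>" a \<alpha>] by (auto simp: P_S_A_T_def indicator_def abs_le_iff)
  moreover have "(\<bar>y\<bar> < a) = (P < A)"
    using assms powr_less_powr_iff[of "\<bar>y\<bar>" a \<alpha>] by (simp add: P_S_A_T_def)
  ultimately have "trunc_Psi_kernel \<alpha> a t y z = kendall_trunc_Psi A T P S"
    unfolding trunc_Psi_kernel_def kendall_trunc_Psi_eq[OF PS A atoms] by (simp only:) simp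
  then show ?thesis
    using nn_integral_kdd_trunc_Psi[OF assms(1-3), of y z] by (simp only: P_S_A_T_def)
qed

subsection \<open>Integration against a symmetric law\<close>

lemma sym_prob_measure_uminus:
  assumes "sym_prob \<nu>" "B \<in> sets borel"
  shows "measure \<nu> (uminus -` B) = measure \<nu> B"
proof -
  have sets: "sets \<nu> = sets borel" and sym: "distr \<nu> borel uminus = \<nu>"
    using assms(1) by (auto simp: sym_prob_def)
  have "measure \<nu> B = measure (distr \<nu> borel uminus) B" using sym by simp
  also have "\<dots> = measure \<nu> (uminus -` B)"
    using assms(2) sets_eq_imp_space_eq[OF sets]
    by (subst measure_distr) (auto simp: measurable_cong_sets[OF sets refl])
  finally show ?thesis ..
qed

lemma sym_prob_measure_Icc:
  assumes "sym_prob \<nu>" "0 \<le> a"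
  shows "measure \<nu> {-a..a} = 2 * cdfF \<nu> a - 1"
proof -
  interpret prob_space \<nu> using assms(1) by (simp add: sym_prob_def)
  have sets: "sets \<nu> = sets borel" using assms(1) by (simp add: sym_prob_def)
  have "uminus -` {a<..} = {..<-a}" by auto
  then have neg: "measure \<nu> {..<-a} = measure \<nu> {a<..}"
    using sym_prob_measure_uminus[OF assms(1), of "{a<..}"] by simp
  have "measure \<nu> {..a} = measure \<nu> {..<-a} + measure \<nu> {-a..a}"
    using assms(2) sets by (subst finite_measure_Union[symmetric]) (auto intro!: arg_cong[where f="measure \<nu>"])
  moreover have "measure \<nu> {a<..} = 1 - measure \<nu> {..a}"
    using prob_compl[of "{..a}"] sets sets_eq_imp_space_eq[OF sets] by (simp add: Compl_eq_Diff_UNIV[symmetric])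
  ultimately show ?thesis by (simp add: cdfF_def neg)
qed

lemma AE_sym_prob_abs_neq:
  assumes "sym_prob \<nu>" "measure \<nu> {b} = 0"
  shows "AE z in \<nu>. \<bar>z\<bar> \<noteq> b"
proof -
  interpret prob_space \<nu> using assms(1) by (simp add: sym_prob_def)
  have sets: "sets \<nu> = sets borel" using assms(1) by (simp add: sym_prob_def)
  have AE_neq: "AE z in \<nu>. z \<noteq> c" if "measure \<nu> {c} = 0" for c
    using that sets by (intro AE_I'[where N="{c}"]) (auto simp: emeasure_eq_measure)
  have "uminus -` {b} = {-b}" by auto
  then have "measure \<nu> {-b} = 0"
    using sym_prob_measure_uminus[OF assms(1), of "{b}"] assms(2) by simp
  then have "AE z in \<nu>. z \<noteq> b \<and> z \<noteq> -b" using AE_neq assms(2) by auto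
  then show ?thesis by eventually_elim auto
qed

lemma trunc_Psi_kernel_nonneg:
  assumes "\<alpha> > 0" "0 < a"
  shows "0 \<le> trunc_Psi_kernel \<alpha> a t y z"
  using Psi_le_indicator[OF assms, of z] Psi_bounds[of \<alpha>] assms(1) unfolding trunc_Psi_kernel_def
  by (intro divide_nonneg_pos add_nonneg_nonneg mult_nonneg_nonneg) auto

lemma integral_trunc_Psi_kernel:
  assumes "\<alpha> > 0" "sym_prob \<nu>" "0 < a"
  shows "(\<integral>z. trunc_Psi_kernel \<alpha> a t y z \<partial>\<nu>)
    = 1/2 * Psi \<alpha> (y / a) * Mf \<alpha> \<nu> a t
      + 1/2 * Gf \<alpha> \<nu> a * Psi \<alpha> (a / t) * (if \<bar>y\<bar> < a then 1 else 0)
      + 1/2 * Psi \<alpha> (y / t) * Gf \<alpha> \<nu> t"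
proof -
  interpret prob_space \<nu> using assms(2) by (simp add: sym_prob_def)
  have sets: "sets \<nu> = sets borel" using assms(2) by (simp add: sym_prob_def)
  have Psi_int: "integrable \<nu> (\<lambda>z. Psi \<alpha> (z / b))" for b
  proof (rule integrable_const_bound[where B=1])
    show "AE z in \<nu>. norm (Psi \<alpha> (z / b)) \<le> 1" using Psi_bounds[of \<alpha>] assms(1) by simp
    show "(\<lambda>z. Psi \<alpha> (z / b)) \<in> borel_measurable \<nu>"
      unfolding measurable_cong_sets[OF sets refl] Psi_def by measurable
  qed
  have ind_int: "integrable \<nu> (indicator {-a..a} :: real \<Rightarrow> real)"
    using sets by (intro integrable_real_indicator) (auto simp: emeasure_eq_measure)
  define c1 c2 c3 where
    "c1 = Psi \<alpha> (y/a) * Psi \<alpha> (a/t) / 2"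
    "c2 = (Psi \<alpha> (y/a) * (1 - 2 * Psi \<alpha> (a/t)) + Psi \<alpha> (a/t) * (if \<bar>y\<bar> < a then 1 else 0)) / 2"
    "c3 = Psi \<alpha> (y/t) / 2"
  have "trunc_Psi_kernel \<alpha> a t y z = c1 * indicator {-a..a} z + c2 * Psi \<alpha> (z/a) + c3 * Psi \<alpha> (z/t)" for z
    by (simp add: trunc_Psi_kernel_def c1_c2_c3_def field_simps)
  then have "(\<integral>z. trunc_Psi_kernel \<alpha> a t y z \<partial>\<nu>) = c1 * measure \<nu> {-a..a} + c2 * Gf \<alpha> \<nu> a + c3 * Gf \<alpha> \<nu> t"
    using Psi_int ind_int sets by (simp add: Gf_def emeasure_eq_measure)
  also have "measure \<nu> {-a..a} = 2 * cdfF \<nu> a - 1"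
    using sym_prob_measure_Icc[OF assms(2)] assms(3) by simp
  finally show ?thesis
    by (simp add: Mf_def Hf_def c1_c2_c3_def field_simps)
qed

theorem mainTheorem4:
  fixes \<alpha> a t y :: real and \<nu> :: "real measure"
  assumes "\<alpha> > 0"
    and "sym_prob \<nu>"
    and "measure \<nu> {0} = 0"
    and "0 < a" and "a \<le> t"
    and "measure \<nu> {a} = 0" and "measure \<nu> {t} = 0"
    and "\<bar>y\<bar> \<noteq> a"
  shows "(\<integral>x. indicator {..a} x * Psi \<alpha> (x / t) \<partial>(kconv \<alpha> (sdelta y) \<nu>))
       = 1/2 * Psi \<alpha> (y / a) * Mf \<alpha> \<nu> a t
         + 1/2 * Gf \<alpha> \<nu> a * Psi \<alpha> (a / t) * (if \<bar>y\<bar> < a then 1 else 0)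
         + 1/2 * Psi \<alpha> (y / t) * Gf \<alpha> \<nu> t"
proof -
  have f: "(\<lambda>x. indicator {..a} x * Psi \<alpha> (x / t)) \<in> borel_measurable borel"
    unfolding Psi_def by measurable
  have sets: "sets \<nu> = sets borel" using assms(2) by (simp add: sym_prob_def)
  have "AE z in \<nu>. \<bar>z\<bar> \<noteq> a \<and> \<bar>z\<bar> \<noteq> t"
    using AE_sym_prob_abs_neq[OF assms(2,6)] AE_sym_prob_abs_neq[OF assms(2,7)] by eventually_elim simp
  then have "AE z in \<nu>. (\<integral>\<^sup>+x. ennreal (indicator {..a} x * Psi \<alpha> (x / t)) \<partial>kdd \<alpha> y z)
                        = ennreal (trunc_Psi_kernel \<alpha> a t y z)"
    by eventually_elim (use assms in \<open>simp add: nn_integral_kdd_trunc_Psi_eq_kernel\<close>)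
  moreover have "trunc_Psi_kernel \<alpha> a t y \<in> borel_measurable \<nu>"
    unfolding measurable_cong_sets[OF sets refl] trunc_Psi_kernel_def Psi_def by measurable
  ultimately have "enn2real (\<integral>\<^sup>+x. ennreal (indicator {..a} x * Psi \<alpha> (x / t)) \<partial>kconv \<alpha> (sdelta y) \<nu>)
      = (\<integral>z. trunc_Psi_kernel \<alpha> a t y z \<partial>\<nu>)"
    using assms f by (simp add: nn_integral_kconv_sdelta enn2real_nn_integral_eq_integral trunc_Psi_kernel_nonneg)
  moreover have "(\<integral>x. indicator {..a} x * Psi \<alpha> (x / t) \<partial>kconv \<alpha> (sdelta y) \<nu>)
      = enn2real (\<integral>\<^sup>+x. ennreal (indicator {..a} x * Psi \<alpha> (x / t)) \<partial>kconv \<alpha> (sdelta y) \<nu>)"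
    using f by (intro integral_eq_nn_integral) (auto simp: Psi_bounds measurable_cong_sets[OF sets_kconv refl])
  ultimately show ?thesis
    using integral_trunc_Psi_kernel[OF assms(1,2,4)] by simp
qed

end
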